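(* Let $(S(t),E(t),I(t),R(t))$ be a solution of the SEIR initial value problem described in the context such that $S(t)>0$, $E(t)>0$ and $I(t)>0$ for $t>0$. Then the limit $R(\infty)=\lim_{t\to\infty}R(t)$ exists, and, writing $a:=e^{-(\beta/\gamma)R(\infty)}$ and $u_0:=e^{-(\beta/\gamma)\tilde R}$, there is a function $\psi$, continuous and positive on $(a,u_0]$ and $C^1$ on $(a,u_0)$, satisfying the Abel differential equation of the second kind \[ \psi'\psi-\frac{\gamma+\delta}{u}\psi=-\delta\,\frac{\beta N-\beta\tilde S e^{(\beta/\gamma)\tilde R}u+\gamma\log u}{u},\qquad u\in(a,u_0), \] together with $\psi(u_0)=\beta\tilde I$ and $\lim_{u\to a+0}\psi(u)=0$, such that, with \[ t=\varphi(u)=\int_u^{u_0}\frac{d\xi}{\xi\psi(\xi)}, \] the solution has the parametric representation, for $a<u\le u_0$, \[ S(\varphi(u))=\tilde S e^{(\beta/\gamma)\tilde R}u,\qquad E(\varphi(u))=\tilde E e^{-\delta\varphi(u)}+\tilde S e^{(\beta/\gamma)\tilde R}e^{-\delta\varphi(u)}\int_u^{u_0}e^{\delta\varphi(v)}dv, \] \[ I(\varphi(u))=N-\tilde S e^{(\beta/\gamma)\tilde R}u+\frac{\gamma}{\beta}\log u-\tilde E e^{-\delta\varphi(u)}-\tilde S e^{(\beta/\gamma)\tilde R}e^{-\delta\varphi(u)}\int_u^{u_0}e^{\delta\varphi(v)}dv,\qquad R(\varphi(u))=-\frac{\gamma}{\beta}\log u . \]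
   Context: Let $\beta,\gamma,\delta>0$ be constants and $\tilde S,\tilde E,\tilde I,\tilde R$ real numbers with $N:=\tilde S+\tilde E+\tilde I+\tilde R>0$. The SEIR initial value problem is $S'(t)=-\beta S(t)I(t)$, $E'(t)=\beta S(t)I(t)-\delta E(t)$, $I'(t)=\delta E(t)-\gamma I(t)$, $R'(t)=\gamma I(t)$ for $t>0$, with $S(0)=\tilde S$, $E(0)=\tilde E$, $I(0)=\tilde I$, $R(0)=\tilde R$; a solution is a vector function $(S,E,I,R)$ of class $C^1(0,\infty)\cap C[0,\infty)$ satisfying these. Standing assumptions: (A1) $\tilde I>0$; (A2) $\tilde E>(\gamma/\delta)\tilde I$; (A3) $\tilde S>\delta\tilde E/(\beta\tilde I)$; (A4) $\tilde R\ge 0$ and $N>\tilde S e^{(\beta/\gamma)\tilde R}+\tilde R$. *)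

theory Defs
  imports "HOL-Analysis.Analysis"
begin

end

theory Submission
  imports Defs
begin

(* N = S + E + I + R and S e^((beta/gamma) R) are first integrals. R increases and is
   bounded, so it converges; since R' = gamma I and I' >= -gamma I is bounded below,
   this forces I -> 0. Hence u = e^(-(beta/gamma) R) maps [0, oo) homeomorphically and
   decreasingly onto (a, u0]. Its inverse phi satisfies phi' = -1 / (u psi) with
   psi = beta I o phi, which integrates to the formula for t = phi u. Along phi,
   S = K u and R = -(gamma/beta) ln u by the first integrals; E e^(delta t) has
   derivative -K e^(delta phi) in u, which gives E and then I by conservation;
   differentiating psi and eliminating E + I by conservation gives the Abel equation. *)

lemma mono_on_bdd_above_tendsto_SUP:
  fixes f :: "real \<Rightarrow> real"
  assumes mono: "mono_on {c..} f" and bdd: "bdd_above (f ` {c..})"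
  shows "(f \<longlongrightarrow> (SUP t\<in>{c..}. f t)) at_top"
proof (rule increasing_tendsto)
  show "\<forall>\<^sub>F t in at_top. f t \<le> (SUP t\<in>{c..}. f t)"
    using eventually_ge_at_top[of c] by eventually_elim (use bdd in \<open>auto intro: cSUP_upper\<close>)
next
  fix y assume "y < (SUP t\<in>{c..}. f t)"
  then obtain t0 where t0: "t0 \<ge> c" "y < f t0"
    by (subst (asm) less_cSUP_iff) (use bdd in auto)
  show "\<forall>\<^sub>F t in at_top. y < f t"
  proof (rule eventually_mono[OF eventually_ge_at_top[of t0]])
    fix t assume "t0 \<le> t"
    then show "y < f t"
      using t0 mono_onD[OF mono, of t0 t] by auto
  qed
qed

lemma continuous_on_greaterThanAtMost_if_atLeastAtMost:
  fixes g :: "real \<Rightarrow> 'b::topological_space"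
  assumes "\<And>c. a < c \<Longrightarrow> c \<le> b \<Longrightarrow> continuous_on {c..b} g"
  shows "continuous_on {a<..b} g"
proof -
  have "continuous (at x within {a<..b}) g" if x: "x \<in> {a<..b}" for x
  proof -
    define c where "c = (a + x) / 2"
    have c: "a < c" "c < x" using x by (auto simp: c_def)
    have "at x within {a<..b} = at x within {c..b}"
      by (rule at_within_nhd[of _ "{c<..}"]) (use c x in auto)
    moreover have "continuous (at x within {c..b}) g"
      using assms[of c] c x by (simp add: continuous_on_eq_continuous_within)
    ultimately show ?thesis by simp
  qed
  thus ?thesis by (simp add: continuous_on_eq_continuous_within)
qed

context
  fixes g :: "real \<Rightarrow> real" and a :: real
  assumes cont: "continuous_on {0..} g"
    and decr: "\<And>s t. 0 \<le> s \<Longrightarrow> s < t \<Longrightarrow> g t < g s"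
    and lim: "(g \<longlongrightarrow> a) at_top"
begin

lemma decreasing_inj_on: "inj_on g {0..}"
  by (rule inj_onI) (metis atLeast_iff decr less_irrefl linorder_cases)

lemma decreasing_limit_less: "t \<ge> 0 \<Longrightarrow> a < g t"
proof -
  assume t: "t \<ge> 0"
  have "\<forall>\<^sub>F s in at_top. g s \<le> g (t + 1)"
    using eventually_ge_at_top[of "t + 1"] by eventually_elim (use t decr in \<open>force simp: le_less\<close>)
  then have "a \<le> g (t + 1)"
    using tendsto_upperbound[OF lim] by simp
  then show ?thesis
    using decr[of t "t + 1"] t by simp
qed

lemma decreasing_exists_less: "a < c \<Longrightarrow> \<exists>t\<ge>0. g t < c"
proof -
  assume "a < c"
  then obtain t where "\<forall>s\<ge>t. g s < c \<and> 0 \<le> s"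
    using eventually_conj[OF order_tendstoD(2)[OF lim] eventually_ge_at_top[of 0]]
    unfolding eventually_at_top_linorder by blast
  then show ?thesis by auto
qed

lemma decreasing_interval_subset_image:
  assumes "t \<ge> 0" "g t \<le> c"
  shows "{c..g 0} \<subseteq> g ` {0..t}"
proof
  fix y assume y: "y \<in> {c..g 0}"
  have "continuous_on {0..t} g"
    by (rule continuous_on_subset[OF cont]) auto
  then show "y \<in> g ` {0..t}"
    using IVT2'[of g t y 0] assms y by force
qed

lemma decreasing_image_halfline: "g ` {0..} = {a<..g 0}"
proof (intro equalityI subsetI)
  fix y assume "y \<in> g ` {0..}"
  then show "y \<in> {a<..g 0}"
    using decreasing_limit_less decr by (force simp: le_less)
next
  fix y assume y: "y \<in> {a<..g 0}"
  then obtain t where "t \<ge> 0" "g t < y"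
    using decreasing_exists_less by auto
  then show "y \<in> g ` {0..}"
    using decreasing_interval_subset_image[of t y] y by force
qed

lemma continuous_on_inv_into_decreasing: "continuous_on {a<..g 0} (inv_into {0..} g)"
proof (rule continuous_on_greaterThanAtMost_if_atLeastAtMost)
  fix c assume "a < c"
  then obtain t where t: "t \<ge> 0" "g t < c"
    using decreasing_exists_less by blast
  have "continuous_on {0..t} g"
    by (rule continuous_on_subset[OF cont]) auto
  then have "continuous_on (g ` {0..t}) (inv_into {0..} g)"
    by (rule continuous_on_inv) (auto simp: inv_into_f_f[OF decreasing_inj_on])
  then show "continuous_on {c..g 0} (inv_into {0..} g)"
    by (rule continuous_on_subset) (use decreasing_interval_subset_image t in auto)
qed

lemma homeomorphism_decreasing_halfline: "homeomorphism {0..} {a<..g 0} g (inv_into {0..} g)"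
proof (rule homeomorphismI)
  show "inv_into {0..} g ` {a<..g 0} \<subseteq> {0..}"
    unfolding decreasing_image_halfline[symmetric] by (rule image_subsetI, rule inv_into_into)
qed (use cont continuous_on_inv_into_decreasing decreasing_image_halfline decreasing_inj_on
    in \<open>auto simp: f_inv_into_f\<close>)

lemma inv_into_decreasing_tendsto_at_top: "filterlim (inv_into {0..} g) at_top (at_right a)"
  unfolding filterlim_at_top
proof
  fix Z :: real
  define t where "t = max Z 0"
  have t: "t \<ge> 0" "g t \<le> g 0"
    using decr[of 0 t] by (auto simp: t_def le_less)
  have "\<forall>\<^sub>F y in at_right a. a < y \<and> y < g t"
    using decreasing_limit_less[OF t(1)] by (auto simp: eventually_at_right_field)
  then show "\<forall>\<^sub>F y in at_right a. Z \<le> inv_into {0..} g y"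
  proof eventually_elim
    case (elim y)
    then have "y \<in> g ` {0..}"
      using decreasing_image_halfline t by auto
    then have "g (inv_into {0..} g y) = y" "inv_into {0..} g y \<in> {0..}"
      by (rule f_inv_into_f, rule inv_into_into)
    then have "t \<le> inv_into {0..} g y"
      using elim decr[of "inv_into {0..} g y" t] by (cases "t \<le> inv_into {0..} g y") auto
    then show ?case
      by (simp add: t_def)
  qed
qed

end

lemma tendsto_0_if_antiderivative_converges:
  fixes F g g' :: "real \<Rightarrow> real"
  assumes F: "\<And>t. t > 0 \<Longrightarrow> (F has_real_derivative g t) (at t)"
    and F_lim: "(F \<longlongrightarrow> L) at_top"
    and g: "\<And>t. t > 0 \<Longrightarrow> (g has_real_derivative g' t) (at t)"
    and g'_bound: "\<And>t. t > 0 \<Longrightarrow> g' t \<ge> - M"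
    and g_nonneg: "\<And>t. t > 0 \<Longrightarrow> g t \<ge> 0"
  shows "(g \<longlongrightarrow> 0) at_top"
proof (rule tendstoI)
  fix e :: real assume e: "e > 0"
  define h where "h = e / (2 * (\<bar>M\<bar> + 1))"
  have h: "h > 0" "h * \<bar>M\<bar> \<le> e / 2"
    using e by (auto simp: h_def field_simps)
  have "filterlim (\<lambda>t. t + h) at_top at_top"
    by (subst add.commute) (rule filterlim_tendsto_add_at_top[OF tendsto_const filterlim_ident])
  then have "((\<lambda>t. F (t + h) - F t) \<longlongrightarrow> L - L) at_top"
    by (intro tendsto_diff F_lim filterlim_compose[OF F_lim])
  then have "\<forall>\<^sub>F t in at_top. F (t + h) - F t < h * (e / 2)"
    using h e by (intro order_tendstoD(2)) auto
  with eventually_gt_at_top[of 0]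
  show "\<forall>\<^sub>F t in at_top. dist (g t) 0 < e"
  proof eventually_elim
    case (elim t)
    obtain z where z: "t < z" "z < t + h" "F (t + h) - F t = h * g z"
      using MVT2[of t "t + h" F g] F elim h by auto
    have "g z < e / 2"
      using z elim h by (simp add: mult_less_cancel_left_pos)
    obtain w where w: "t < w" "w < z" "g z - g t = (z - t) * g' w"
      using MVT2[of t z g g'] g elim z by auto
    have "(z - t) * g' w \<ge> (z - t) * (- M)"
      using g'_bound[of w] w elim by (intro mult_left_mono) auto
    moreover have "(z - t) * M \<le> (z - t) * \<bar>M\<bar>"
      using z by (intro mult_left_mono) auto
    moreover have "\<dots> \<le> h * \<bar>M\<bar>"
      using z by (intro mult_right_mono) auto
    ultimately have "g t < e"
      using w \<open>g z < e / 2\<close> h by (simp add: algebra_simps)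
    then show ?case
      using g_nonneg[of t] elim by simp
  qed
qed

lemma DERIV_zero_imp_constant_on_atLeast:
  fixes f :: "real \<Rightarrow> real"
  assumes "continuous_on {c..} f" and "\<And>t. t > c \<Longrightarrow> (f has_real_derivative 0) (at t)"
    and "t \<ge> c"
  shows "f t = f c"
proof (cases "t = c")
  case False
  then show ?thesis
    using assms by (intro DERIV_isconst_end continuous_on_subset[OF assms(1)]) auto
qed simp

locale SEIR_solution =
  fixes \<beta> \<gamma> \<delta> :: real and S E I R :: "real \<Rightarrow> real"
  assumes rates_pos: "\<beta> > 0" "\<gamma> > 0" "\<delta> > 0"
    and continuous: "continuous_on {0..} S" "continuous_on {0..} E"
      "continuous_on {0..} I" "continuous_on {0..} R"
    and S_deriv: "\<And>t. t > 0 \<Longrightarrow> (S has_real_derivative (- \<beta> * S t * I t)) (at t)"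
    and E_deriv: "\<And>t. t > 0 \<Longrightarrow> (E has_real_derivative (\<beta> * S t * I t - \<delta> * E t)) (at t)"
    and I_deriv: "\<And>t. t > 0 \<Longrightarrow> (I has_real_derivative (\<delta> * E t - \<gamma> * I t)) (at t)"
    and R_deriv: "\<And>t. t > 0 \<Longrightarrow> (R has_real_derivative (\<gamma> * I t)) (at t)"
    and positive: "\<And>t. t > 0 \<Longrightarrow> S t > 0 \<and> E t > 0 \<and> I t > 0"
    and I_0_pos: "I 0 > 0"
begin

definition N :: real where "N = S 0 + E 0 + I 0 + R 0"

definition K :: real where "K = S 0 * exp ((\<beta> / \<gamma>) * R 0)"

lemma total_population: "t \<ge> 0 \<Longrightarrow> S t + E t + I t + R t = N"
  unfolding N_def
proof (rule DERIV_zero_imp_constant_on_atLeast[where f = "\<lambda>t. S t + E t + I t + R t"])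
  show "continuous_on {0..} (\<lambda>t. S t + E t + I t + R t)"
    using continuous by (intro continuous_intros)
  fix t :: real assume "t > 0"
  then show "((\<lambda>t. S t + E t + I t + R t) has_real_derivative 0) (at t)"
    using S_deriv E_deriv I_deriv R_deriv
    by (auto intro!: derivative_eq_intros)
qed

lemma S_exp_R_eq_K: "t \<ge> 0 \<Longrightarrow> S t * exp ((\<beta> / \<gamma>) * R t) = K"
  unfolding K_def
proof (rule DERIV_zero_imp_constant_on_atLeast[where f = "\<lambda>t. S t * exp ((\<beta> / \<gamma>) * R t)"])
  show "continuous_on {0..} (\<lambda>t. S t * exp ((\<beta> / \<gamma>) * R t))"
    using continuous by (intro continuous_intros)
  fix t :: real assume "t > 0"
  then show "((\<lambda>t. S t * exp ((\<beta> / \<gamma>) * R t)) has_real_derivative 0) (at t)"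
    using S_deriv R_deriv rates_pos
    by (auto intro!: derivative_eq_intros simp: field_simps)
qed

lemma R_strict_mono:
  assumes "0 \<le> s" "s < t"
  shows "R s < R t"
proof (rule DERIV_pos_imp_increasing_open[OF \<open>s < t\<close>])
  show "continuous_on {s..t} R"
    using assms by (intro continuous_on_subset[OF continuous(4)]) auto
  fix x assume "s < x" "x < t"
  then show "\<exists>y. (R has_real_derivative y) (at x) \<and> y > 0"
    using assms R_deriv[of x] positive[of x] rates_pos by auto
qed

lemma R_less_N: "t > 0 \<Longrightarrow> R t < N"
  using total_population[of t] positive[of t] by auto

definition R_inf :: real where "R_inf = (SUP t\<in>{0..}. R t)"

lemma R_tendsto: "(R \<longlongrightarrow> R_inf) at_top"
  unfolding R_inf_def
proof (rule mono_on_bdd_above_tendsto_SUP)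
  show "mono_on {0..} R"
    using R_strict_mono by (intro mono_onI) (force simp: le_less)
  have "R t \<le> max (R 0) N" if "t \<ge> 0" for t
    using R_less_N[of t] that by (cases "t = 0") auto
  then show "bdd_above (R ` {0..})"
    by (intro bdd_aboveI) auto
qed

lemma I_tendsto_0: "(I \<longlongrightarrow> 0) at_top"
proof (rule tendsto_0_if_antiderivative_converges)
  fix t :: real assume t: "t > 0"
  show "((\<lambda>t. R t / \<gamma>) has_real_derivative I t) (at t)"
    using R_deriv[OF t] rates_pos by (auto intro!: derivative_eq_intros)
  show "(I has_real_derivative \<delta> * E t - \<gamma> * I t) (at t)"
    using I_deriv[OF t] .
  have "I t < N - R 0"
    using total_population[of t] positive[OF t] R_strict_mono[of 0 t] t by auto
  then have "\<gamma> * I t \<le> \<gamma> * (N - R 0)"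
    using rates_pos by simp
  moreover have "\<delta> * E t \<ge> 0"
    using positive[OF t] rates_pos by simp
  ultimately show "\<delta> * E t - \<gamma> * I t \<ge> - (\<gamma> * (N - R 0))"
    by linarith
  show "I t \<ge> 0"
    using positive[OF t] by simp
next
  show "((\<lambda>t. R t / \<gamma>) \<longlongrightarrow> R_inf / \<gamma>) at_top"
    by (intro tendsto_divide R_tendsto tendsto_const) (use rates_pos in auto)
qed

definition U :: "real \<Rightarrow> real" where "U t = exp (- (\<beta> / \<gamma>) * R t)"

definition u_inf :: real where "u_inf = exp (- (\<beta> / \<gamma>) * R_inf)"

definition \<phi> :: "real \<Rightarrow> real" where "\<phi> = inv_into {0..} U"

lemma U_pos: "U t > 0"
  by (simp add: U_def)

lemma U_continuous: "continuous_on {0..} U"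
  unfolding U_def[abs_def] using continuous(4) by (intro continuous_intros)

lemma U_strict_antimono: "0 \<le> s \<Longrightarrow> s < t \<Longrightarrow> U t < U s"
  using R_strict_mono rates_pos by (simp add: U_def divide_strict_right_mono)

lemma U_tendsto: "(U \<longlongrightarrow> u_inf) at_top"
  unfolding U_def[abs_def] u_inf_def by (intro tendsto_intros R_tendsto)

lemma U_deriv: "t > 0 \<Longrightarrow> (U has_real_derivative - \<beta> * I t * U t) (at t)"
  unfolding U_def[abs_def] using R_deriv rates_pos
  by (auto intro!: derivative_eq_intros)

lemma S_eq_K_U: "t \<ge> 0 \<Longrightarrow> S t = K * U t"
  using S_exp_R_eq_K[of t] by (simp add: U_def exp_minus field_simps)

lemma homeomorphism_U_\<phi>: "homeomorphism {0..} {u_inf<..U 0} U \<phi>"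
  unfolding \<phi>_def using U_continuous U_strict_antimono U_tendsto
  by (rule homeomorphism_decreasing_halfline)

lemma \<phi>_tendsto_at_top: "filterlim \<phi> at_top (at_right u_inf)"
  unfolding \<phi>_def using U_continuous U_strict_antimono U_tendsto
  by (rule inv_into_decreasing_tendsto_at_top)

lemma
  assumes "u \<in> {u_inf<..U 0}"
  shows \<phi>_nonneg: "\<phi> u \<ge> 0" and U_\<phi>: "U (\<phi> u) = u"
  using assms homeomorphism_image2[OF homeomorphism_U_\<phi>] homeomorphism_apply2[OF homeomorphism_U_\<phi>]
  by auto

lemma \<phi>_U_0: "\<phi> (U 0) = 0"
  using homeomorphism_apply1[OF homeomorphism_U_\<phi>, of 0] by simp

lemma \<phi>_pos: "u_inf < u \<Longrightarrow> u < U 0 \<Longrightarrow> \<phi> u > 0"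
  using \<phi>_nonneg[of u] U_\<phi>[of u] by (cases "\<phi> u = 0") auto

lemma \<phi>_deriv:
  assumes u: "u_inf < u" "u < U 0"
  shows "(\<phi> has_real_derivative - 1 / (\<beta> * u * I (\<phi> u))) (at u)"
proof -
  have der: "(U has_real_derivative - \<beta> * I (\<phi> u) * u) (at (\<phi> u))"
    using U_deriv[OF \<phi>_pos[OF u]] U_\<phi>[of u] u by simp
  have nonzero: "- \<beta> * I (\<phi> u) * u \<noteq> 0"
    using positive[OF \<phi>_pos[OF u]] rates_pos U_pos[of "\<phi> u"] U_\<phi>[of u] u by auto
  have inverse: "U (\<phi> v) = v" if "u_inf < v" "v < U 0" for v
    using U_\<phi>[of v] that by simp
  have "continuous_on {u_inf<..<U 0} \<phi>"
    by (rule continuous_on_subset[OF homeomorphism_cont2[OF homeomorphism_U_\<phi>]]) auto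
  then have "isCont \<phi> u"
    using u by (simp add: continuous_on_eq_continuous_at)
  from DERIV_inverse_function[OF der nonzero u inverse this]
  show ?thesis
    by (simp add: divide_inverse mult_ac)
qed

lemma u_inf_pos: "u_inf > 0"
  by (simp add: u_inf_def)

lemma \<phi>_continuous: "continuous_on {u_inf<..U 0} \<phi>"
  using homeomorphism_cont2[OF homeomorphism_U_\<phi>] .

lemma continuous_on_compose_\<phi>:
  "continuous_on {0..} f \<Longrightarrow> continuous_on {u_inf<..U 0} (\<lambda>u. f (\<phi> u))"
  by (rule continuous_on_compose2[OF _ \<phi>_continuous]) (auto intro: \<phi>_nonneg)

lemma
  assumes "u \<in> {u_inf<..U 0}"
  shows S_\<phi>: "S (\<phi> u) = K * u"
    and R_\<phi>: "R (\<phi> u) = - (\<gamma> / \<beta>) * ln u"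
    and E_plus_I_\<phi>: "E (\<phi> u) + I (\<phi> u) = N - K * u + (\<gamma> / \<beta>) * ln u"
proof -
  show S: "S (\<phi> u) = K * u"
    using S_eq_K_U[OF \<phi>_nonneg] U_\<phi> assms by simp
  have "ln u = - (\<beta> / \<gamma>) * R (\<phi> u)"
    using U_\<phi>[OF assms] by (metis U_def ln_exp)
  then show R: "R (\<phi> u) = - (\<gamma> / \<beta>) * ln u"
    using rates_pos by (simp add: field_simps)
  show "E (\<phi> u) + I (\<phi> u) = N - K * u + (\<gamma> / \<beta>) * ln u"
    using total_population[OF \<phi>_nonneg[OF assms]] S R by simp
qed

lemma I_\<phi>_pos: "u \<in> {u_inf<..U 0} \<Longrightarrow> I (\<phi> u) > 0"
  using \<phi>_nonneg[of u] positive[of "\<phi> u"] I_0_pos by (cases "\<phi> u = 0") auto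

definition \<psi> :: "real \<Rightarrow> real" where "\<psi> u = \<beta> * I (\<phi> u)"

definition \<psi>' :: "real \<Rightarrow> real"
  where "\<psi>' u = (\<gamma> * I (\<phi> u) - \<delta> * E (\<phi> u)) / (u * I (\<phi> u))"

lemma \<psi>_continuous: "continuous_on {u_inf<..U 0} \<psi>"
  unfolding \<psi>_def[abs_def] using continuous_on_compose_\<phi>[OF continuous(3)]
  by (intro continuous_intros)

lemma \<psi>_pos: "u \<in> {u_inf<..U 0} \<Longrightarrow> \<psi> u > 0"
  using I_\<phi>_pos rates_pos by (simp add: \<psi>_def)

lemma \<psi>_U_0: "\<psi> (U 0) = \<beta> * I 0"
  by (simp add: \<psi>_def \<phi>_U_0)

lemma \<psi>_tendsto_0: "(\<psi> \<longlongrightarrow> 0) (at_right u_inf)"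
  unfolding \<psi>_def[abs_def]
  using tendsto_mult_left[OF filterlim_compose[OF I_tendsto_0 \<phi>_tendsto_at_top], of \<beta>]
  by simp

lemma \<psi>_deriv:
  assumes u: "u_inf < u" "u < U 0"
  shows "(\<psi> has_real_derivative \<psi>' u) (at u)"
proof -
  have "((\<lambda>u. I (\<phi> u)) has_real_derivative
      (\<delta> * E (\<phi> u) - \<gamma> * I (\<phi> u)) * (- 1 / (\<beta> * u * I (\<phi> u)))) (at u)"
    using DERIV_chain2[OF I_deriv[OF \<phi>_pos[OF u]] \<phi>_deriv[OF u]] .
  then have "(\<psi> has_real_derivative
      \<beta> * ((\<delta> * E (\<phi> u) - \<gamma> * I (\<phi> u)) * (- 1 / (\<beta> * u * I (\<phi> u))))) (at u)"
    unfolding \<psi>_def[abs_def] by (rule DERIV_cmult)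
  moreover have "\<beta> * ((\<delta> * E (\<phi> u) - \<gamma> * I (\<phi> u)) * (- 1 / (\<beta> * u * I (\<phi> u)))) = \<psi>' u"
    using rates_pos u u_inf_pos I_\<phi>_pos[of u] by (simp add: \<psi>'_def field_simps)
  ultimately show ?thesis
    by simp
qed

lemma \<psi>'_continuous: "continuous_on {u_inf<..<U 0} \<psi>'"
proof -
  have "u * I (\<phi> u) \<noteq> 0" if "u \<in> {u_inf<..U 0}" for u
    using I_\<phi>_pos[OF that] u_inf_pos that by auto
  then have "continuous_on {u_inf<..U 0} \<psi>'"
    unfolding \<psi>'_def[abs_def]
    using continuous_on_compose_\<phi>[OF continuous(2)] continuous_on_compose_\<phi>[OF continuous(3)]
    by (intro continuous_intros) auto
  then show ?thesis
    by (rule continuous_on_subset) auto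
qed

lemma \<psi>_abel_equation:
  assumes u: "u \<in> {u_inf<..U 0}"
  shows "\<psi>' u * \<psi> u - ((\<gamma> + \<delta>) / u) * \<psi> u
    = - \<delta> * ((\<beta> * N - \<beta> * K * u + \<gamma> * ln u) / u)"
proof -
  have "\<beta> * N - \<beta> * K * u + \<gamma> * ln u = \<beta> * (E (\<phi> u) + I (\<phi> u))"
    using E_plus_I_\<phi>[OF u] rates_pos by (simp add: field_simps)
  then show ?thesis
    using I_\<phi>_pos[OF u] u_inf_pos u by (simp add: \<psi>_def \<psi>'_def field_simps)
qed

lemma \<phi>_eq_integral:
  assumes u: "u \<in> {u_inf<..U 0}"
  shows "\<phi> u = integral {u..U 0} (\<lambda>\<xi>. 1 / (\<xi> * \<psi> \<xi>))"
proof -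
  have "((\<lambda>\<xi>. 1 / (\<xi> * \<psi> \<xi>)) has_integral (- \<phi> (U 0)) - (- \<phi> u)) {u..U 0}"
  proof (rule fundamental_theorem_of_calculus_interior)
    show "u \<le> U 0" using u by simp
    show "continuous_on {u..U 0} (\<lambda>v. - \<phi> v)"
      using u by (intro continuous_intros continuous_on_subset[OF \<phi>_continuous]) auto
    fix \<xi> assume "\<xi> \<in> {u<..<U 0}"
    then have \<xi>: "u_inf < \<xi>" "\<xi> < U 0" using u by auto
    have "((\<lambda>v. - \<phi> v) has_real_derivative 1 / (\<xi> * \<psi> \<xi>)) (at \<xi>)"
      using DERIV_minus[OF \<phi>_deriv[OF \<xi>]] by (simp add: \<psi>_def mult_ac)
    then show "((\<lambda>v. - \<phi> v) has_vector_derivative 1 / (\<xi> * \<psi> \<xi>)) (at \<xi>)"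
      by (simp add: has_real_derivative_iff_has_vector_derivative)
  qed
  then show ?thesis
    by (simp add: \<phi>_U_0 integral_unique)
qed

lemma E_\<phi>_integral:
  assumes u: "u \<in> {u_inf<..U 0}"
  shows "K * integral {u..U 0} (\<lambda>v. exp (\<delta> * \<phi> v)) = E (\<phi> u) * exp (\<delta> * \<phi> u) - E 0"
proof -
  define G where "G v = E (\<phi> v) * exp (\<delta> * \<phi> v)" for v
  have "((\<lambda>v. - K * exp (\<delta> * \<phi> v)) has_integral G (U 0) - G u) {u..U 0}"
  proof (rule fundamental_theorem_of_calculus_interior)
    show "u \<le> U 0" using u by simp
    show "continuous_on {u..U 0} G"
      unfolding G_def using u
      by (intro continuous_intros continuous_on_subset[OF continuous_on_compose_\<phi>[OF continuous(2)]]
          continuous_on_subset[OF \<phi>_continuous]) auto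
    fix v assume "v \<in> {u<..<U 0}"
    then have v: "u_inf < v" "v < U 0" using u by auto
    define d\<phi> where "d\<phi> = - 1 / (\<beta> * v * I (\<phi> v))"
    have "((\<lambda>v. E (\<phi> v)) has_real_derivative (\<beta> * S (\<phi> v) * I (\<phi> v) - \<delta> * E (\<phi> v)) * d\<phi>) (at v)"
      unfolding d\<phi>_def using DERIV_chain2[OF E_deriv[OF \<phi>_pos[OF v]] \<phi>_deriv[OF v]] .
    moreover have "((\<lambda>v. exp (\<delta> * \<phi> v)) has_real_derivative exp (\<delta> * \<phi> v) * (\<delta> * d\<phi>)) (at v)"
      unfolding d\<phi>_def using DERIV_chain2[OF DERIV_exp DERIV_cmult[OF \<phi>_deriv[OF v]]] .
    ultimately have "(G has_real_derivative
        (\<beta> * S (\<phi> v) * I (\<phi> v) - \<delta> * E (\<phi> v)) * d\<phi> * exp (\<delta> * \<phi> v)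
        + exp (\<delta> * \<phi> v) * (\<delta> * d\<phi>) * E (\<phi> v)) (at v)"
      unfolding G_def[abs_def] by (rule DERIV_mult)
    moreover have "(\<beta> * S (\<phi> v) * I (\<phi> v) - \<delta> * E (\<phi> v)) * d\<phi> * exp (\<delta> * \<phi> v)
        + exp (\<delta> * \<phi> v) * (\<delta> * d\<phi>) * E (\<phi> v) = - K * exp (\<delta> * \<phi> v)"
      using S_\<phi>[of v] I_\<phi>_pos[of v] v u_inf_pos rates_pos by (simp add: d\<phi>_def field_simps)
    ultimately show "(G has_vector_derivative - K * exp (\<delta> * \<phi> v)) (at v)"
      by (simp add: has_real_derivative_iff_has_vector_derivative)
  qed
  then have "integral {u..U 0} (\<lambda>v. - K * exp (\<delta> * \<phi> v)) = G (U 0) - G u"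
    by (rule integral_unique)
  then have "- K * integral {u..U 0} (\<lambda>v. exp (\<delta> * \<phi> v)) = G (U 0) - G u"
    by simp
  then show ?thesis
    by (simp add: G_def \<phi>_U_0)
qed

lemma E_\<phi>:
  assumes u: "u \<in> {u_inf<..U 0}"
  shows "E (\<phi> u) = E 0 * exp (- \<delta> * \<phi> u)
    + K * exp (- \<delta> * \<phi> u) * integral {u..U 0} (\<lambda>v. exp (\<delta> * \<phi> v))"
proof -
  have "E 0 * exp (- \<delta> * \<phi> u) + K * exp (- \<delta> * \<phi> u) * integral {u..U 0} (\<lambda>v. exp (\<delta> * \<phi> v))
      = exp (- \<delta> * \<phi> u) * (E 0 + K * integral {u..U 0} (\<lambda>v. exp (\<delta> * \<phi> v)))"
    by (simp add: algebra_simps)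
  also have "\<dots> = E (\<phi> u) * (exp (- \<delta> * \<phi> u) * exp (\<delta> * \<phi> u))"
    using E_\<phi>_integral[OF u] by simp
  finally show ?thesis
    by (simp add: exp_minus)
qed

lemma I_\<phi>:
  assumes u: "u \<in> {u_inf<..U 0}"
  shows "I (\<phi> u) = N - K * u + (\<gamma> / \<beta>) * ln u - E 0 * exp (- \<delta> * \<phi> u)
    - K * exp (- \<delta> * \<phi> u) * integral {u..U 0} (\<lambda>v. exp (\<delta> * \<phi> v))"
  using E_plus_I_\<phi>[OF u] E_\<phi>[OF u] by simp

end

theorem theorem1:
  fixes \<beta> \<gamma> \<delta> S0 E0 I0 R0 N :: real
    and S E I R :: "real \<Rightarrow> real"
  defines "N \<equiv> S0 + E0 + I0 + R0"
  assumes params: "\<beta> > 0" "\<gamma> > 0" "\<delta> > 0"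
    and Npos: "N > 0"
    and A1: "I0 > 0"
    and A2: "E0 > (\<gamma> / \<delta>) * I0"
    and A3: "S0 > \<delta> * E0 / (\<beta> * I0)"
    and A4: "R0 \<ge> 0" "N > S0 * exp ((\<beta> / \<gamma>) * R0) + R0"
    and cont: "continuous_on {0..} S" "continuous_on {0..} E"
              "continuous_on {0..} I" "continuous_on {0..} R"
    and dS: "\<And>t. t > 0 \<Longrightarrow> (S has_real_derivative (- \<beta> * S t * I t)) (at t)"
    and dE: "\<And>t. t > 0 \<Longrightarrow> (E has_real_derivative (\<beta> * S t * I t - \<delta> * E t)) (at t)"
    and dI: "\<And>t. t > 0 \<Longrightarrow> (I has_real_derivative (\<delta> * E t - \<gamma> * I t)) (at t)"
    and dR: "\<And>t. t > 0 \<Longrightarrow> (R has_real_derivative (\<gamma> * I t)) (at t)"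
    and init: "S 0 = S0" "E 0 = E0" "I 0 = I0" "R 0 = R0"
    and pos: "\<And>t. t > 0 \<Longrightarrow> S t > 0 \<and> E t > 0 \<and> I t > 0"
  shows "\<exists>Rinf. (R \<longlongrightarrow> Rinf) at_top \<and>
    (let a = exp (- (\<beta> / \<gamma>) * Rinf); u0 = exp (- (\<beta> / \<gamma>) * R0);
         K = S0 * exp ((\<beta> / \<gamma>) * R0) in
     \<exists>\<psi> \<psi>'.
       continuous_on {a<..u0} \<psi> \<and> (\<forall>u\<in>{a<..u0}. \<psi> u > 0) \<and>
       (\<forall>u\<in>{a<..<u0}. (\<psi> has_real_derivative \<psi>' u) (at u)) \<and>
       continuous_on {a<..<u0} \<psi>' \<and>
       (\<forall>u\<in>{a<..<u0}. \<psi>' u * \<psi> u - ((\<gamma> + \<delta>) / u) * \<psi> u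
            = - \<delta> * ((\<beta> * N - \<beta> * K * u + \<gamma> * ln u) / u)) \<and>
       \<psi> u0 = \<beta> * I0 \<and>
       (\<psi> \<longlongrightarrow> 0) (at_right a) \<and>
       (let \<phi> = (\<lambda>u. integral {u..u0} (\<lambda>\<xi>. 1 / (\<xi> * \<psi> \<xi>))) in
        \<forall>u\<in>{a<..u0}.
          S (\<phi> u) = K * u \<and>
          E (\<phi> u) = E0 * exp (- \<delta> * \<phi> u)
                     + K * exp (- \<delta> * \<phi> u) * integral {u..u0} (\<lambda>v. exp (\<delta> * \<phi> v)) \<and>
          I (\<phi> u) = N - K * u + (\<gamma> / \<beta>) * ln u - E0 * exp (- \<delta> * \<phi> u)
                     - K * exp (- \<delta> * \<phi> u) * integral {u..u0} (\<lambda>v. exp (\<delta> * \<phi> v)) \<and>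
          R (\<phi> u) = - (\<gamma> / \<beta>) * ln u))"
proof -
  interpret seir: SEIR_solution \<beta> \<gamma> \<delta> S E I R
    using params cont dS dE dI dR pos A1 init by unfold_locales auto
  have constants: "exp (- (\<beta> / \<gamma>) * R0) = seir.U 0" "S0 * exp ((\<beta> / \<gamma>) * R0) = seir.K"
    "N = seir.N" "exp (- (\<beta> / \<gamma>) * seir.R_inf) = seir.u_inf"
    using init by (simp_all add: seir.U_def seir.K_def seir.N_def N_def seir.u_inf_def)
  have exp_\<phi>_integral: "integral {u..seir.U 0} (\<lambda>v. exp (\<delta> * integral {v..seir.U 0} (\<lambda>\<xi>. 1 / (\<xi> * seir.\<psi> \<xi>))))
      = integral {u..seir.U 0} (\<lambda>v. exp (\<delta> * seir.\<phi> v))"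
    if "u \<in> {seir.u_inf<..seir.U 0}" for u
    using that by (intro integral_cong) (simp add: seir.\<phi>_eq_integral)
  show ?thesis
  proof (rule exI[of _ seir.R_inf], unfold Let_def constants,
      intro conjI exI[of _ seir.\<psi>, OF exI[of _ seir.\<psi>']] ballI)
  qed (use seir.R_tendsto seir.\<psi>_continuous seir.\<psi>_pos seir.\<psi>_deriv seir.\<psi>'_continuous
      seir.\<psi>_abel_equation seir.\<psi>_U_0 seir.\<psi>_tendsto_0
      seir.S_\<phi> seir.E_\<phi> seir.I_\<phi> seir.R_\<phi> seir.\<phi>_eq_integral[symmetric] exp_\<phi>_integral init
      in auto)
qed

end
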